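(* For the interval algorithm $\phi_{\mathrm{int}}$ generating $Y^n$ from the coin process $\mathbf X$, with stopping time $T$, for every integer $m\ge0$ and all real numbers $\lambda,\tau\ge0$, \[ \Pr(T>m)\ \le\ P_{X^m}(\mathcal S_m^c(\lambda)) + P_{Y^n}(\mathcal T_n^c(\tau)) + 2^{-\lambda+\tau+1}, \] where $\mathcal S_m(\lambda)=\{x^m\in\mathcal X^m:\log\frac{1}{P_{X^m}(x^m)}\ge\lambda\}$ and $\mathcal T_n(\tau)=\{y^n\in\mathcal Y^n:\log\frac{1}{P_{Y^n}(y^n)}\le\tau\}$, and complements are in $\mathcal X^m$, $\mathcal Y^n$.
   Context: Logarithms are base 2. $\mathcal X=\{1,\dots,M\}$, $\mathcal Y=\{1,\dots,N\}$ are finite sets; the coin process $\mathbf X=\{X^m\}_{m\ge1}$ on $\mathcal X$ and target process $\mathbf Y=\{Y^n\}_{n\ge1}$ on $\mathcal Y$ are arbitrary processes given by consistent families of distributions $P_{X^m}$, $P_{Y^n}$. Interval algorithm: for a finite sequence $s\in\mathcal X^i$ define an interval $\mathcal I_s=[\underline\alpha_s,\overline\alpha_s)\subseteq[0,1)$ recursively by $\mathcal I_{\bot}=[0,1)$ for the empty sequence and, for $x\in\mathcal X$, $\underline\alpha_{sx}=\underline\alpha_s+(\overline\alpha_s-\underline\alpha_s)\sum_{k=1}^{x-1}P_{X_{i+1}|X^i}(k|s)$, $\overline\alpha_{sx}=\underline\alpha_s+(\overline\alpha_s-\underline\alpha_s)\sum_{k=1}^{x}P_{X_{i+1}|X^i}(k|s)$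 (conditional probabilities given a probability-zero prefix may be chosen arbitrarily); thus $|\mathcal I_s|=P_{X^i}(s)$. Define $\mathcal J_t=[\underline\beta_t,\overline\beta_t)$ for $t\in\mathcal Y^j$ in the same way from the conditional distributions $P_{Y_{j+1}|Y^j}$, so $|\mathcal J_t|=P_{Y^j}(t)$ and $\{\mathcal J_{y^n}\}_{y^n\in\mathcal Y^n}$ partitions $[0,1)$. The interval algorithm observes $X_1,X_2,\dots$ and stops at the first time $m$ such that $\mathcal I_{X^m}\subseteq\mathcal J_{y^n}$ for some $y^n\in\mathcal Y^n$, outputting that $y^n$ (for $P_{X^m}(X^m)>0$ this $y^n$ is unique; it may be run sequentially, outputting $y_j$ as soon as $\mathcal I_{X^i}\subseteq\mathcal J_{y^j}$, with the same stopping time and output). Its stopping time $T$ is this first time ($T=\infty$ if it never happens); $\phi_{\mathrm{int}}(x^m)$ denotes the output if the algorithm has stopped after reading $x^m$, and $\bot$ otherwise. *)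

theory Defs
  imports Complex_Main
begin

(* A process on the alphabet {1..K} is given by a consistent family of
   finite-dimensional distributions, encoded as a function P on finite
   sequences: P s = P_{X^{length s}}(s). *)
definition is_process :: "nat \<Rightarrow> (nat list \<Rightarrow> real) \<Rightarrow> bool" where
  "is_process K P \<longleftrightarrow>
     P [] = 1 \<and>
     (\<forall>s. P s \<ge> 0) \<and>
     (\<forall>s. \<not> set s \<subseteq> {1..K} \<longrightarrow> P s = 0) \<and>
     (\<forall>s. P s = (\<Sum>k\<in>{1..K}. P (s @ [k])))"

definition seqs :: "nat \<Rightarrow> nat \<Rightarrow> nat list set" where
  "seqs K n = {s. length s = n \<and> set s \<subseteq> {1..K}}"

(* conditional probability P_{X_{i+1}|X^i}(k|s); for P s = 0 it is 0 (arbitrary choice) *)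
definition cond :: "(nat list \<Rightarrow> real) \<Rightarrow> nat list \<Rightarrow> nat \<Rightarrow> real" where
  "cond P s k = P (s @ [k]) / P s"

fun ivl_rev :: "(nat list \<Rightarrow> real) \<Rightarrow> nat list \<Rightarrow> real \<times> real" where
  "ivl_rev P [] = (0, 1)"
| "ivl_rev P (x # rs) =
     (let (a, b) = ivl_rev P rs; s = rev rs in
       (a + (b - a) * (\<Sum>k\<in>{1..<x}. cond P s k),
        a + (b - a) * (\<Sum>k\<in>{1..x}. cond P s k)))"

definition ivl :: "(nat list \<Rightarrow> real) \<Rightarrow> nat list \<Rightarrow> real set" where
  "ivl P s = {fst (ivl_rev P (rev s)) ..< snd (ivl_rev P (rev s))}"

definition int_stopped ::
  "(nat list \<Rightarrow> real) \<Rightarrow> nat \<Rightarrow> (nat list \<Rightarrow> real) \<Rightarrow> nat \<Rightarrow> nat list \<Rightarrow> bool" where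
  "int_stopped PX N PY n xs \<longleftrightarrow> (\<exists>ys\<in>seqs N n. ivl PX xs \<subseteq> ivl PY ys)"

definition prob_T_gt ::
  "nat \<Rightarrow> (nat list \<Rightarrow> real) \<Rightarrow> nat \<Rightarrow> (nat list \<Rightarrow> real) \<Rightarrow> nat \<Rightarrow> nat \<Rightarrow> real" where
  "prob_T_gt M PX N PY n m =
     (\<Sum>xs\<in>seqs M m. if (\<forall>i\<le>m. \<not> int_stopped PX N PY n (take i xs)) then PX xs else 0)"

definition S_set :: "nat \<Rightarrow> (nat list \<Rightarrow> real) \<Rightarrow> nat \<Rightarrow> real \<Rightarrow> nat list set" where
  "S_set M PX m lam = {xs\<in>seqs M m. log 2 (1 / PX xs) \<ge> lam}"

definition T_set :: "nat \<Rightarrow> (nat list \<Rightarrow> real) \<Rightarrow> nat \<Rightarrow> real \<Rightarrow> nat list set" where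
  "T_set N PY n tau = {ys\<in>seqs N n. log 2 (1 / PY ys) \<le> tau}"

end

theory Submission
  imports Defs "HOL-Analysis.Analysis"
begin

text \<open>Identify the coin sequences with the disjoint intervals \<open>I\<^sub>x\<close> of length \<open>P\<^sub>X\<^sub>m(x)\<close>
  in \<open>[0,1)\<close>. Apart from the mass of the complement of \<open>S\<^sub>m(\<lambda>)\<close>, \<open>Pr(T > m)\<close> is bounded by the
  Lebesgue measure of the union \<open>U\<close> of the intervals \<open>I\<^sub>x\<close> with \<open>x \<in> S\<^sub>m(\<lambda>)\<close> after which the
  algorithm has not stopped. Such an \<open>I\<^sub>x\<close> lies inside no target interval \<open>J\<^sub>y\<close>, so if it meets
  \<open>J\<^sub>y\<close> it contains an endpoint of \<open>J\<^sub>y\<close>; hence \<open>U \<inter> J\<^sub>y\<close> is covered by at most two of them and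
  has measure at most \<open>2 \<cdot> 2\<^sup>-\<^sup>\<lambda>\<close>. Summing this bound over the at most \<open>2\<^sup>\<tau>\<close> sequences
  \<open>y \<in> T\<^sub>n(\<tau>)\<close> of positive probability, and the trivial bound \<open>P\<^sub>Y\<^sub>n(y)\<close> over the others, gives
  the claim.\<close>

lemma is_process_nonneg: "is_process K P \<Longrightarrow> 0 \<le> P s"
  unfolding is_process_def by blast

lemma is_process_sum_snoc: "is_process K P \<Longrightarrow> (\<Sum>k\<in>{1..K}. P (s @ [k])) = P s"
  unfolding is_process_def by metis

lemma is_process_Nil: "is_process K P \<Longrightarrow> P [] = 1"
  unfolding is_process_def by blast

lemma is_process_snoc_le:
  assumes "is_process K P" shows "P (s @ [k]) \<le> P s"
proof (cases "k \<in> {1..K}")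
  case True
  then have "P (s @ [k]) \<le> (\<Sum>j\<in>{1..K}. P (s @ [j]))"
    by (intro member_le_sum) (auto simp: is_process_nonneg[OF assms])
  then show ?thesis using is_process_sum_snoc[OF assms, of s] by simp
next
  case False
  then have "\<not> set (s @ [k]) \<subseteq> {1..K}" by auto
  then have "P (s @ [k]) = 0" using assms unfolding is_process_def by blast
  then show ?thesis by (simp add: is_process_nonneg[OF assms])
qed

lemma cond_nonneg: "is_process K P \<Longrightarrow> 0 \<le> cond P s k"
  unfolding cond_def by (simp add: is_process_nonneg)

lemma mult_cond: "is_process K P \<Longrightarrow> P s * cond P s k = P (s @ [k])"
  using is_process_snoc_le[of K P s k] is_process_nonneg[of K P "s @ [k]"]
  by (cases "P s = 0") (auto simp: cond_def)

lemma sum_cond_le_1: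
  assumes "is_process K P" "x \<le> K" shows "(\<Sum>k\<in>{1..x}. cond P s k) \<le> 1"
proof -
  have "(\<Sum>k\<in>{1..x}. cond P s k) \<le> (\<Sum>k\<in>{1..K}. cond P s k)"
    using assms by (intro sum_mono2) (auto simp: cond_nonneg)
  also have "\<dots> = P s / P s"
    using is_process_sum_snoc[OF assms(1), of s] by (simp add: cond_def flip: sum_divide_distrib)
  also have "\<dots> \<le> 1" by (cases "P s = 0") auto
  finally show ?thesis .
qed

lemma ivl_rev_Cons:
  "ivl_rev P (x # rs) =
    (let a = fst (ivl_rev P rs); b = snd (ivl_rev P rs) in
      (a + (b - a) * (\<Sum>k\<in>{1..<x}. cond P (rev rs) k), a + (b - a) * (\<Sum>k\<in>{1..x}. cond P (rev rs) k)))"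
  by (simp add: case_prod_beta Let_def)

declare ivl_rev.simps(2)[simp del]

lemma ivl_rev_width:
  assumes "is_process K P" "set r \<subseteq> {1..K}"
  shows "snd (ivl_rev P r) - fst (ivl_rev P r) = P (rev r)"
  using assms(2)
proof (induction r)
  case Nil
  then show ?case by (simp add: is_process_Nil[OF assms(1)])
next
  case (Cons x rs)
  have "{1..x} = insert x {1..<x}" using Cons.prems by auto
  then have "(\<Sum>k\<in>{1..x}. cond P (rev rs) k) - (\<Sum>k\<in>{1..<x}. cond P (rev rs) k) = cond P (rev rs) x"
    by simp
  then show ?case
    using Cons mult_cond[OF assms(1), of "rev rs" x]
    by (simp add: ivl_rev_Cons Let_def flip: right_diff_distrib)
qed

lemma ivl_rev_Cons_within:
  assumes "is_process K P" "set (x # rs) \<subseteq> {1..K}"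
  shows "fst (ivl_rev P rs) \<le> fst (ivl_rev P (x # rs))" "snd (ivl_rev P (x # rs)) \<le> snd (ivl_rev P rs)"
proof -
  define a b where "a = fst (ivl_rev P rs)" and "b = snd (ivl_rev P rs)"
  have "0 \<le> b - a"
    using ivl_rev_width[OF assms(1), of rs] assms(2) is_process_nonneg[OF assms(1)] by (simp add: a_def b_def)
  moreover have "0 \<le> (\<Sum>k\<in>{1..<x}. cond P (rev rs) k)"
    by (intro sum_nonneg) (simp add: cond_nonneg[OF assms(1)])
  moreover have "(\<Sum>k\<in>{1..x}. cond P (rev rs) k) \<le> 1"
    using assms by (intro sum_cond_le_1) auto
  ultimately have "0 \<le> (b - a) * (\<Sum>k\<in>{1..<x}. cond P (rev rs) k)"
    "(b - a) * (\<Sum>k\<in>{1..x}. cond P (rev rs) k) \<le> b - a"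
    by (simp_all add: mult_left_le)
  then show "fst (ivl_rev P rs) \<le> fst (ivl_rev P (x # rs))" "snd (ivl_rev P (x # rs)) \<le> snd (ivl_rev P rs)"
    by (simp_all add: ivl_rev_Cons Let_def a_def[symmetric] b_def[symmetric])
qed

lemma ivl_rev_in_unit:
  assumes "is_process K P" "set r \<subseteq> {1..K}"
  shows "0 \<le> fst (ivl_rev P r) \<and> snd (ivl_rev P r) \<le> 1"
  using assms(2)
proof (induction r)
  case (Cons x rs)
  then have "0 \<le> fst (ivl_rev P rs)" "snd (ivl_rev P rs) \<le> 1" by simp_all
  with ivl_rev_Cons_within[OF assms(1) Cons.prems] show ?case by linarith
qed simp

lemma ivl_rev_sibling:
  assumes "is_process K P" "set rs \<subseteq> {1..K}" "x < x'"
  shows "snd (ivl_rev P (x # rs)) \<le> fst (ivl_rev P (x' # rs))"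
proof -
  have "(\<Sum>k\<in>{1..x}. cond P (rev rs) k) \<le> (\<Sum>k\<in>{1..<x'}. cond P (rev rs) k)"
    using assms by (intro sum_mono2) (auto simp: cond_nonneg)
  moreover have "0 \<le> snd (ivl_rev P rs) - fst (ivl_rev P rs)"
    using ivl_rev_width[OF assms(1,2)] is_process_nonneg[OF assms(1)] by simp
  ultimately have "(snd (ivl_rev P rs) - fst (ivl_rev P rs)) * (\<Sum>k\<in>{1..x}. cond P (rev rs) k)
      \<le> (snd (ivl_rev P rs) - fst (ivl_rev P rs)) * (\<Sum>k\<in>{1..<x'}. cond P (rev rs) k)"
    by (rule mult_left_mono)
  then show ?thesis by (simp add: ivl_rev_Cons Let_def)
qed

text \<open>At the first position where two sequences differ their intervals are disjoint siblings,
  and extending a sequence only shrinks its interval.\<close>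
lemma ivl_rev_separated:
  assumes "is_process K P" "length r = length r'" "set r \<subseteq> {1..K}" "set r' \<subseteq> {1..K}" "r \<noteq> r'"
  shows "snd (ivl_rev P r) \<le> fst (ivl_rev P r') \<or> snd (ivl_rev P r') \<le> fst (ivl_rev P r)"
  using assms(2-)
proof (induction r r' rule: list_induct2)
  case (Cons x rs x' rs')
  show ?case
  proof (cases "rs = rs'")
    case True
    with Cons.prems have "x < x' \<or> x' < x" by auto
    then show ?thesis using ivl_rev_sibling[OF assms(1)] Cons.prems True by auto
  next
    case False
    with Cons have "snd (ivl_rev P rs) \<le> fst (ivl_rev P rs') \<or> snd (ivl_rev P rs') \<le> fst (ivl_rev P rs)"
      by simp
    with ivl_rev_Cons_within[OF assms(1), of x rs] ivl_rev_Cons_within[OF assms(1), of x' rs'] Cons.prems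
    show ?thesis by linarith
  qed
qed simp

lemma seqs_Suc: "seqs K (Suc n) = (\<lambda>(s, k). s @ [k]) ` (seqs K n \<times> {1..K})"
proof
  show "seqs K (Suc n) \<subseteq> (\<lambda>(s, k). s @ [k]) ` (seqs K n \<times> {1..K})"
  proof
    fix t assume t: "t \<in> seqs K (Suc n)"
    then have "t \<noteq> []" by (auto simp: seqs_def)
    then have "t = butlast t @ [last t]" "last t \<in> set t" by simp_all
    moreover have "set (butlast t) \<subseteq> set t" by (rule in_set_butlastD[THEN subsetI])
    ultimately show "t \<in> (\<lambda>(s, k). s @ [k]) ` (seqs K n \<times> {1..K})"
      using t by (force simp: seqs_def)
  qed
qed (auto simp: seqs_def)

lemma finite_seqs: "finite (seqs K n)"
  using finite_lists_length_eq[of "{1..K}" n] by (simp add: seqs_def conj_commute)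

lemma sum_seqs_eq_1:
  assumes "is_process K P" shows "(\<Sum>s\<in>seqs K n. P s) = 1"
proof (induction n)
  case 0
  have "seqs K 0 = {[]}" by (auto simp: seqs_def)
  then show ?case by (simp add: is_process_Nil[OF assms])
next
  case (Suc n)
  have "inj_on (\<lambda>(s, k). s @ [k]) (seqs K n \<times> {1..K})" by (auto simp: inj_on_def)
  then have "(\<Sum>s\<in>seqs K (Suc n). P s) = (\<Sum>(s, k)\<in>seqs K n \<times> {1..K}. P (s @ [k]))"
    unfolding seqs_Suc by (subst sum.reindex) (simp_all add: case_prod_beta)
  also have "\<dots> = (\<Sum>s\<in>seqs K n. \<Sum>k\<in>{1..K}. P (s @ [k]))"
    by (rule sum.cartesian_product[symmetric])
  also have "\<dots> = (\<Sum>s\<in>seqs K n. P s)"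
    using is_process_sum_snoc[OF assms] by simp
  finally show ?case using Suc by simp
qed

lemma fmeasurable_Ico: "{a..<b::real} \<in> fmeasurable lborel"
  by (cases "a \<le> b") (auto intro: fmeasurableI)

lemma ivl_fmeasurable: "ivl P s \<in> fmeasurable lborel"
  by (simp add: ivl_def fmeasurable_Ico)

lemma ivl_sets: "ivl P s \<in> sets lborel"
  by (rule fmeasurableD[OF ivl_fmeasurable])

lemma ivl_subset_unit:
  "is_process K P \<Longrightarrow> set s \<subseteq> {1..K} \<Longrightarrow> ivl P s \<subseteq> {0..<1}"
  using ivl_rev_in_unit[of K P "rev s"] by (auto simp: ivl_def)

lemma measure_ivl:
  assumes "is_process K P" "set s \<subseteq> {1..K}"
  shows "measure lborel (ivl P s) = P s"
  using ivl_rev_width[OF assms(1), of "rev s"] assms is_process_nonneg[OF assms(1), of s]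
  by (simp add: ivl_def)

lemma disjoint_family_on_ivl:
  assumes "is_process K P" "A \<subseteq> seqs K n"
  shows "disjoint_family_on (ivl P) A"
  unfolding disjoint_family_on_def
proof (intro ballI impI)
  fix s t assume "s \<in> A" "t \<in> A" "s \<noteq> t"
  then have "snd (ivl_rev P (rev s)) \<le> fst (ivl_rev P (rev t)) \<or> snd (ivl_rev P (rev t)) \<le> fst (ivl_rev P (rev s))"
    using assms by (intro ivl_rev_separated[OF assms(1)]) (auto simp: seqs_def)
  then show "ivl P s \<inter> ivl P t = {}" by (auto simp: ivl_def)
qed

lemma measure_UN_ivl:
  assumes "is_process K P" "A \<subseteq> seqs K n"
  shows "measure lborel (\<Union>s\<in>A. ivl P s) = (\<Sum>s\<in>A. P s)"
proof -
  have "finite A" using assms(2) finite_seqs finite_subset by blast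
  then have "measure lborel (\<Union>s\<in>A. ivl P s) = (\<Sum>s\<in>A. measure lborel (ivl P s))"
    using disjoint_family_on_ivl[OF assms] ivl_sets
      ivl_fmeasurable[THEN fmeasurableD2]
    by (intro measure_finite_Union) auto
  also have "\<dots> = (\<Sum>s\<in>A. P s)"
    using assms by (intro sum.cong) (auto simp: measure_ivl seqs_def)
  finally show ?thesis .
qed

text \<open>The intervals of all sequences of a given length cover \<open>[0,1)\<close> up to a null set.\<close>
lemma measure_le_sum_Int_ivl:
  assumes "is_process K P" "U \<in> sets lborel" "U \<subseteq> {0..<1}"
  shows "measure lborel U \<le> (\<Sum>s\<in>seqs K n. measure lborel (U \<inter> ivl P s))"
proof -
  define V where "V = (\<Union>s\<in>seqs K n. ivl P s)"
  define W where "W = (\<Union>s\<in>seqs K n. U \<inter> ivl P s)"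
  have V_sets: "V \<in> sets lborel"
    unfolding V_def by (intro sets.finite_UN finite_seqs ivl_sets)
  have W_sets: "W \<in> sets lborel"
    unfolding W_def by (intro sets.finite_UN finite_seqs sets.Int assms(2) ivl_sets)
  have "V \<subseteq> {0..<1}"
    unfolding V_def seqs_def using ivl_subset_unit[OF assms(1)] by blast
  moreover have "measure lborel V = 1"
    unfolding V_def by (subst measure_UN_ivl[OF assms(1) order_refl]) (rule sum_seqs_eq_1[OF assms(1)])
  ultimately have gap: "measure lborel ({0..<1} - V) = 0"
    using V_sets fmeasurable_Ico[THEN fmeasurableD2, of 0 1] by (simp add: measure_Diff)
  have "U \<subseteq> W \<union> ({0..<1} - V)"
    using assms(3) by (auto simp: V_def W_def)
  moreover have "W \<union> ({0..<1} - V) \<in> fmeasurable lborel"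
  proof (rule fmeasurableI2[OF fmeasurable_Ico])
    show "W \<union> ({0..<1} - V) \<subseteq> {0..<1::real}" using assms(3) by (auto simp: W_def)
  qed (use W_sets V_sets in auto)
  ultimately have "measure lborel U \<le> measure lborel (W \<union> ({0..<1} - V))"
    using assms(2) by (intro measure_mono_fmeasurable)
  also have "\<dots> \<le> measure lborel W + measure lborel ({0..<1} - V)"
    using W_sets V_sets by (intro measure_Un_le) auto
  also have "\<dots> = measure lborel W" using gap by simp
  also have "\<dots> \<le> (\<Sum>s\<in>seqs K n. measure lborel (U \<inter> ivl P s))"
    unfolding W_def by (intro measure_UNION_le finite_seqs sets.Int assms(2) ivl_sets)
  finally show ?thesis .
qed

lemma Ico_meets_not_subset_endpoint:
  fixes a b c d :: real
  assumes "{a..<b} \<inter> {c..<d} \<noteq> {}" "\<not> {a..<b} \<subseteq> {c..<d}"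
  shows "c \<in> {a..<b} \<or> d \<in> {a..<b}"
proof -
  obtain z where "z \<in> {a..<b} \<inter> {c..<d}" using assms(1) by blast
  moreover obtain w where "w \<in> {a..<b}" "w \<notin> {c..<d}" using assms(2) by blast
  ultimately show ?thesis by auto
qed

lemma disjoint_family_on_containing:
  assumes "disjoint_family_on I A"
  shows "{x\<in>A. p \<in> I x} = {} \<or> (\<exists>x\<in>A. {x\<in>A. p \<in> I x} = {x})"
  using assms unfolding disjoint_family_on_def by blast

text \<open>Every interval of the family that meets \<open>[c,d)\<close> without lying inside it contains
  \<open>c\<close> or \<open>d\<close>, and by disjointness at most one interval contains each of these points.\<close>
lemma measure_UN_Int_Ico_le:
  fixes I :: "'a \<Rightarrow> real set" and c d \<epsilon> :: real
  assumes "finite A" "disjoint_family_on I A"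
    and Ico: "\<And>x. x \<in> A \<Longrightarrow> \<exists>a b. I x = {a..<b}"
    and not_subset: "\<And>x. x \<in> A \<Longrightarrow> \<not> I x \<subseteq> {c..<d}"
    and small: "\<And>x. x \<in> A \<Longrightarrow> measure lborel (I x) \<le> \<epsilon>" and "0 \<le> \<epsilon>"
  shows "measure lborel ((\<Union>x\<in>A. I x) \<inter> {c..<d}) \<le> 2 * \<epsilon>"
proof -
  have I_fmeasurable: "I x \<in> fmeasurable lborel" if "x \<in> A" for x
    using Ico[OF that] fmeasurable_Ico by auto
  define W where "W p = (\<Union>x\<in>{x\<in>A. p \<in> I x}. I x)" for p
  have W: "W p \<in> fmeasurable lborel \<and> measure lborel (W p) \<le> \<epsilon>" for p
    using disjoint_family_on_containing[OF assms(2), of p]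
  proof
    assume "{x\<in>A. p \<in> I x} = {}"
    then have "W p = {}" unfolding W_def by blast
    then show ?thesis using \<open>0 \<le> \<epsilon>\<close> by simp
  next
    assume "\<exists>x\<in>A. {x\<in>A. p \<in> I x} = {x}"
    then obtain x where "x \<in> A" "W p = I x" by (auto simp: W_def)
    then show ?thesis using I_fmeasurable small by simp
  qed
  have "(\<Union>x\<in>A. I x) \<inter> {c..<d} \<subseteq> W c \<union> W d"
  proof
    fix z assume "z \<in> (\<Union>x\<in>A. I x) \<inter> {c..<d}"
    then obtain x where x: "x \<in> A" "z \<in> I x" "z \<in> {c..<d}" by blast
    moreover obtain a b where "I x = {a..<b}" using Ico[OF x(1)] by blast
    ultimately have "c \<in> I x \<or> d \<in> I x"
      using Ico_meets_not_subset_endpoint[of a b c d] not_subset by blast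
    then show "z \<in> W c \<union> W d" using x by (auto simp: W_def)
  qed
  moreover have "(\<Union>x\<in>A. I x) \<inter> {c..<d} \<in> sets lborel"
    using assms(1) I_fmeasurable[THEN fmeasurableD] by (intro sets.Int sets.finite_UN) auto
  ultimately have "measure lborel ((\<Union>x\<in>A. I x) \<inter> {c..<d}) \<le> measure lborel (W c \<union> W d)"
    using W by (intro measure_mono_fmeasurable) auto
  also have "\<dots> \<le> measure lborel (W c) + measure lborel (W d)"
    using W[THEN conjunct1, THEN fmeasurableD] by (intro measure_Un_le)
  also have "\<dots> \<le> 2 * \<epsilon>" using W[of c] W[of d] by simp
  finally show ?thesis .
qed

lemma S_set_le:
  assumes "is_process M PX" "xs \<in> S_set M PX m lam"
  shows "PX xs \<le> 2 powr - lam"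
proof (cases "PX xs = 0")
  case False
  then have "0 < PX xs" using is_process_nonneg[OF assms(1)] by (simp add: order_less_le)
  moreover have "2 powr lam \<le> 1 / PX xs"
    using assms(2) calculation by (simp add: S_set_def le_log_iff)
  ultimately show ?thesis by (simp add: powr_minus field_simps)
qed simp

lemma T_set_ge:
  assumes "ys \<in> T_set N PY n tau" "0 < PY ys"
  shows "2 powr - tau \<le> PY ys"
proof -
  have "1 / PY ys \<le> 2 powr tau"
    using assms by (simp add: T_set_def log_le_iff)
  then show ?thesis using assms(2) by (simp add: powr_minus field_simps)
qed

lemma card_T_set_le:
  assumes "is_process N PY"
  shows "real (card {ys\<in>T_set N PY n tau. 0 < PY ys}) \<le> 2 powr tau"
proof -
  let ?T = "{ys\<in>T_set N PY n tau. 0 < PY ys}"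
  have "real (card ?T) * 2 powr - tau \<le> (\<Sum>ys\<in>?T. PY ys)"
    by (intro sum_bounded_below) (auto intro: T_set_ge)
  also have "\<dots> \<le> (\<Sum>ys\<in>seqs N n. PY ys)"
    using is_process_nonneg[OF assms] by (intro sum_mono2 finite_seqs) (auto simp: T_set_def)
  also have "\<dots> = 1" by (rule sum_seqs_eq_1[OF assms])
  finally show ?thesis by (simp add: powr_minus field_simps)
qed

lemma sum_not_stopped_S_set_le:
  assumes pX: "is_process M PX" and pY: "is_process N PY"
  shows "(\<Sum>xs | xs \<in> S_set M PX m lam \<and> \<not> int_stopped PX N PY n xs. PX xs)
    \<le> (\<Sum>ys\<in>seqs N n - T_set N PY n tau. PY ys) + 2 powr (- lam + tau + 1)"
proof -
  define A where "A = {xs. xs \<in> S_set M PX m lam \<and> \<not> int_stopped PX N PY n xs}"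
  define U where "U = (\<Union>xs\<in>A. ivl PX xs)"
  define T where "T = T_set N PY n tau"
  define f where "f ys = measure lborel (U \<inter> ivl PY ys)" for ys
  have A_seqs: "A \<subseteq> seqs M m" by (auto simp: A_def S_set_def)
  have finite_A: "finite A" using A_seqs finite_seqs by (rule finite_subset)
  have T_seqs: "T \<subseteq> seqs N n" by (auto simp: T_def T_set_def)
  have U_sets: "U \<in> sets lborel"
    unfolding U_def by (intro sets.finite_UN finite_A ivl_sets)
  have U_unit: "U \<subseteq> {0..<1}"
    unfolding U_def using A_seqs ivl_subset_unit[OF pX] by (fastforce simp: seqs_def)
  have f_le: "f ys \<le> PY ys" if "ys \<in> seqs N n" for ys
  proof -
    have "f ys \<le> measure lborel (ivl PY ys)"
      unfolding f_def using U_sets ivl_fmeasurable by (intro measure_mono_fmeasurable) auto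
    then show ?thesis using that measure_ivl[OF pY] by (simp add: seqs_def)
  qed
  have f_le_two_intervals: "f ys \<le> 2 * 2 powr - lam" if "ys \<in> seqs N n" for ys
    unfolding f_def U_def ivl_def[of PY]
  proof (rule measure_UN_Int_Ico_le[OF finite_A disjoint_family_on_ivl[OF pX A_seqs]])
    fix xs assume "xs \<in> A"
    then show "\<not> ivl PX xs \<subseteq> {fst (ivl_rev PY (rev ys))..<snd (ivl_rev PY (rev ys))}"
      using that by (auto simp: A_def int_stopped_def ivl_def[of PY])
    show "measure lborel (ivl PX xs) \<le> 2 powr - lam"
      using \<open>xs \<in> A\<close> S_set_le[OF pX] measure_ivl[OF pX] by (auto simp: A_def S_set_def seqs_def)
  qed (auto simp: ivl_def)
  have "(\<Sum>xs\<in>A. PX xs) = measure lborel U"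
    unfolding U_def by (rule measure_UN_ivl[OF pX A_seqs, symmetric])
  also have "\<dots> \<le> (\<Sum>ys\<in>seqs N n. f ys)"
    unfolding f_def by (rule measure_le_sum_Int_ivl[OF pY U_sets U_unit])
  also have "\<dots> = (\<Sum>ys\<in>seqs N n - T. f ys) + (\<Sum>ys\<in>T. f ys)"
    by (rule sum.subset_diff[OF T_seqs finite_seqs])
  also have "(\<Sum>ys\<in>seqs N n - T. f ys) \<le> (\<Sum>ys\<in>seqs N n - T. PY ys)"
    using f_le by (intro sum_mono) auto
  also have "(\<Sum>ys\<in>T. f ys) \<le> (\<Sum>ys\<in>T. if 0 < PY ys then 2 * 2 powr - lam else 0)"
  proof (rule sum_mono)
    fix ys assume "ys \<in> T"
    then show "f ys \<le> (if 0 < PY ys then 2 * 2 powr - lam else 0)"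
      using T_seqs f_le f_le_two_intervals is_process_nonneg[OF pY, of ys] by force
  qed
  also have "\<dots> = (\<Sum>ys\<in>{ys\<in>T. 0 < PY ys}. 2 * 2 powr - lam)"
    using finite_subset[OF T_seqs finite_seqs] by (rule sum.inter_filter[symmetric])
  also have "\<dots> = real (card {ys\<in>T. 0 < PY ys}) * (2 * 2 powr - lam)"
    by simp
  also have "\<dots> \<le> 2 powr tau * (2 * 2 powr - lam)"
    unfolding T_def by (intro mult_right_mono card_T_set_le[OF pY]) simp
  also have "\<dots> = 2 powr (- lam + tau + 1)"
    by (simp only: powr_add) (simp add: mult_ac)
  finally show ?thesis by (simp add: A_def T_def)
qed

lemma prob_T_gt_le_sum_not_stopped:
  assumes "is_process M PX"
  shows "prob_T_gt M PX N PY n m \<le> (\<Sum>xs | xs \<in> seqs M m \<and> \<not> int_stopped PX N PY n xs. PX xs)"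
proof -
  have "prob_T_gt M PX N PY n m \<le> (\<Sum>xs\<in>seqs M m. if \<not> int_stopped PX N PY n xs then PX xs else 0)"
    unfolding prob_T_gt_def
  proof (rule sum_mono)
    fix xs assume "xs \<in> seqs M m"
    then have "take m xs = xs" by (simp add: seqs_def)
    then have "(\<forall>i\<le>m. \<not> int_stopped PX N PY n (take i xs)) \<longrightarrow> \<not> int_stopped PX N PY n xs"
      by (metis order_refl)
    then show "(if \<forall>i\<le>m. \<not> int_stopped PX N PY n (take i xs) then PX xs else 0)
      \<le> (if \<not> int_stopped PX N PY n xs then PX xs else 0)"
      using is_process_nonneg[OF assms, of xs] by auto
  qed
  also have "\<dots> = (\<Sum>xs | xs \<in> seqs M m \<and> \<not> int_stopped PX N PY n xs. PX xs)"
    by (rule sum.inter_filter[OF finite_seqs, symmetric])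
  finally show ?thesis .
qed

theorem theorem2:
  fixes M N n m :: nat and PX PY :: "nat list \<Rightarrow> real" and lam tau :: real
  assumes "M \<ge> 1" and "N \<ge> 1"
    and "is_process M PX" and "is_process N PY"
    and "lam \<ge> 0" and "tau \<ge> 0"
  shows "prob_T_gt M PX N PY n m
     \<le> (\<Sum>xs\<in>seqs M m - S_set M PX m lam. PX xs)
       + (\<Sum>ys\<in>seqs N n - T_set N PY n tau. PY ys)
       + 2 powr (- lam + tau + 1)"
proof -
  let ?X = "seqs M m" and ?S = "S_set M PX m lam" and ?stop = "int_stopped PX N PY n"
  have "prob_T_gt M PX N PY n m \<le> (\<Sum>xs | xs \<in> ?X \<and> \<not> ?stop xs. PX xs)"
    by (rule prob_T_gt_le_sum_not_stopped[OF assms(3)])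
  also have "\<dots> \<le> (\<Sum>xs \<in> (?X - ?S) \<union> {xs. xs \<in> ?S \<and> \<not> ?stop xs}. PX xs)"
    using is_process_nonneg[OF assms(3)] finite_seqs by (intro sum_mono2) (auto simp: S_set_def)
  also have "\<dots> = (\<Sum>xs\<in>?X - ?S. PX xs) + (\<Sum>xs | xs \<in> ?S \<and> \<not> ?stop xs. PX xs)"
    using finite_seqs by (intro sum.union_disjoint) (auto simp: S_set_def)
  also have "\<dots> \<le> (\<Sum>xs\<in>?X - ?S. PX xs) + ((\<Sum>ys\<in>seqs N n - T_set N PY n tau. PY ys)
      + 2 powr (- lam + tau + 1))"
    using sum_not_stopped_S_set_le[OF assms(3,4)] by (rule add_left_mono)
  finally show ?thesis by simp
qed

end
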